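(* Let $q$ be a prime power, let $\lambda \in \mathbb{F}_{q^n}\setminus\mathbb{F}_q$, $t = [\mathbb{F}_q(\lambda):\mathbb{F}_q]$, let $\overline{S}$ be an $\mathbb{F}_{q^t}$-subspace of $\mathbb{F}_{q^n}$ of $\mathbb{F}_{q^t}$-dimension $l>0$, let $b\in\mathbb{F}_{q^n}^*$ with $b\mathbb{F}_{q^t}\cap\overline{S}=\{0\}$, let $0<m<t$, $k = tl+m$, and let $S = \overline{S} \oplus b\langle 1, \lambda, \ldots, \lambda^{m-1}\rangle_{\mathbb{F}_q}$ (a $k$-dimensional $\mathbb{F}_q$-subspace). If $\alpha \in \mathbb{F}_{q^n}^*$ satisfies $\dim_{\mathbb{F}_{q^t}}(\overline{S} \cap \alpha\overline{S}) = i$, then $\dim_{\mathbb{F}_q}(S \cap \alpha S) \leq 2m + ti$. *)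

theory Defs
  imports "HOL-Computational_Algebra.Primes"
begin

definition subfield :: "'a::field set \<Rightarrow> bool" where
  "subfield K \<longleftrightarrow> 0 \<in> K \<and> 1 \<in> K \<and>
     (\<forall>x\<in>K. \<forall>y\<in>K. x + y \<in> K \<and> x * y \<in> K) \<and>
     (\<forall>x\<in>K. - x \<in> K \<and> inverse x \<in> K)"

definition gen_subfield :: "'a::field set \<Rightarrow> 'a set" where
  "gen_subfield A = \<Inter>{K. subfield K \<and> A \<subseteq> K}"

definition K_span :: "'a::field set \<Rightarrow> 'a set \<Rightarrow> 'a set" where
  "K_span K A = {\<Sum>x\<in>C. c x * x | C c. finite C \<and> C \<subseteq> A \<and> (\<forall>x\<in>C. c x \<in> K)}"

definition K_subspace :: "'a::field set \<Rightarrow> 'a set \<Rightarrow> bool" where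
  "K_subspace K V \<longleftrightarrow> 0 \<in> V \<and> (\<forall>x\<in>V. \<forall>y\<in>V. x + y \<in> V) \<and>
     (\<forall>c\<in>K. \<forall>x\<in>V. c * x \<in> V)"

definition K_indep :: "'a::field set \<Rightarrow> 'a set \<Rightarrow> bool" where
  "K_indep K B \<longleftrightarrow> (\<forall>C c. finite C \<and> C \<subseteq> B \<and> (\<forall>x\<in>C. c x \<in> K) \<and>
      (\<Sum>x\<in>C. c x * x) = 0 \<longrightarrow> (\<forall>x\<in>C. c x = 0))"

definition K_basis :: "'a::field set \<Rightarrow> 'a set \<Rightarrow> 'a set \<Rightarrow> bool" where
  "K_basis K V B \<longleftrightarrow> B \<subseteq> V \<and> K_indep K B \<and> K_span K B = V"

definition K_dim :: "'a::field set \<Rightarrow> 'a set \<Rightarrow> nat" where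
  "K_dim K V = card (SOME B. K_basis K V B)"

definition prime_power :: "nat \<Rightarrow> bool" where
  "prime_power q \<longleftrightarrow> (\<exists>p e. prime p \<and> e > 0 \<and> q = p ^ e)"

end

theory Submission
  imports Defs "HOL-Computational_Algebra.Polynomial" "HOL-Library.FuncSet"
begin

text \<open>Every w in S \<inter> \<alpha>S can be written both as s + y and as \<alpha>(s' + y'), with s, s' in Sbar
  and y, y' in the F_q-span Y of b, b\<lambda>, ..., b\<lambda>^(m-1), which has at most q^m elements. For a
  fixed pair (y, \<alpha>y') the admissible w form a coset of Sbar \<inter> \<alpha>Sbar, which has q^(ti) elements.
  Hence |S \<inter> \<alpha>S| \<le> q^(2m + ti), and an F_q-subspace has q^dim elements.\<close>

lemma subfield_facts:
  assumes "subfield K"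
  shows "0 \<in> K" "1 \<in> K" "\<And>x y. x \<in> K \<Longrightarrow> y \<in> K \<Longrightarrow> x + y \<in> K"
    "\<And>x y. x \<in> K \<Longrightarrow> y \<in> K \<Longrightarrow> x * y \<in> K"
    "\<And>x. x \<in> K \<Longrightarrow> - x \<in> K" "\<And>x. x \<in> K \<Longrightarrow> inverse x \<in> K"
  using assms unfolding subfield_def by simp_all

lemma subfield_diff: "subfield K \<Longrightarrow> x \<in> K \<Longrightarrow> y \<in> K \<Longrightarrow> x - y \<in> K"
  unfolding diff_conv_add_uminus by (intro subfield_facts(3,5)) simp_all

lemma subfield_card_ge_2:
  fixes K :: "'a::{field,finite} set"
  assumes "subfield K"
  shows "card K \<ge> 2"
proof -
  have "{0, 1} \<subseteq> K" using subfield_facts[OF assms] by blast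
  then have "card {0::'a, 1} \<le> card K" by (intro card_mono) auto
  then show ?thesis by simp
qed

lemma subfield_power_card:
  fixes K :: "'a::{field,finite} set"
  assumes K: "subfield K" and x: "x \<in> K"
  shows "x ^ card K = x"
proof (cases "x = 0")
  case True
  then show ?thesis using subfield_card_ge_2[OF K] by simp
next
  case False
  let ?K = "K - {0}"
  have inj: "inj_on (\<lambda>y. x * y) ?K" using False by (auto simp: inj_on_def)
  have "(\<lambda>y. x * y) ` ?K \<subseteq> ?K" using K x False by (auto simp: subfield_def)
  then have perm: "(\<lambda>y. x * y) ` ?K = ?K"
    using inj by (simp add: card_image card_subset_eq)
  have "(\<Prod>y\<in>?K. y) = (\<Prod>y\<in>?K. x * y)"
    using prod.reindex[OF inj, of id] by (simp add: perm)
  also have "\<dots> = x ^ card ?K * (\<Prod>y\<in>?K. y)" by (simp add: prod.distrib)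
  finally have "x ^ card ?K = 1" by simp
  moreover have "card K = Suc (card ?K)"
    by (metis card_Suc_Diff1 finite subfield_facts(1)[OF K])
  ultimately show ?thesis by simp
qed

lemma subfield_eq_power_card_fixed_points:
  fixes K :: "'a::{field,finite} set"
  assumes K: "subfield K"
  shows "K = {x. x ^ card K = x}"
proof -
  let ?N = "card K"
  define p :: "'a poly" where "p = monom 1 ?N + [:0, -1:]"
  have N: "?N \<ge> 2" by (rule subfield_card_ge_2[OF K])
  have "degree p = ?N"
    unfolding p_def using N by (subst degree_add_eq_left) (auto simp: degree_monom_eq)
  then have "p \<noteq> 0" using N by auto
  have roots: "{x. poly p x = 0} = {x. x ^ ?N = x}" by (simp add: p_def poly_monom)
  have "K \<subseteq> {x. x ^ ?N = x}" using subfield_power_card[OF K] by blast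
  moreover have "card {x::'a. x ^ ?N = x} \<le> ?N"
    using card_poly_roots_bound[OF \<open>p \<noteq> 0\<close>] \<open>degree p = ?N\<close> roots by simp
  ultimately show ?thesis by (intro card_seteq) auto
qed

lemma subfield_subset_if_card_power:
  fixes F K :: "'a::{field,finite} set"
  assumes F: "subfield F" and K: "subfield K" and card_K: "card K = card F ^ t"
  shows "F \<subseteq> K"
proof
  fix x assume x: "x \<in> F"
  have "x ^ (card F ^ k) = x" for k
  proof (induction k)
    case (Suc k)
    have "x ^ (card F ^ Suc k) = (x ^ (card F ^ k)) ^ card F"
      by (simp add: power_mult[symmetric] mult.commute)
    then show ?case using Suc subfield_power_card[OF F x] by simp
  qed simp
  then have "x \<in> {y. y ^ card K = y}" using card_K by simp
  then show "x \<in> K" using subfield_eq_power_card_fixed_points[OF K] by simp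
qed

lemma K_spanI:
  assumes "finite C" "C \<subseteq> A" "\<forall>x\<in>C. c x \<in> K" "v = (\<Sum>x\<in>C. c x * x)"
  shows "v \<in> K_span K A"
  using assms unfolding K_span_def by blast

lemma K_spanE:
  assumes "v \<in> K_span K A"
  obtains C c where "finite C" "C \<subseteq> A" "\<forall>x\<in>C. c x \<in> K" "v = (\<Sum>x\<in>C. c x * x)"
  using assms unfolding K_span_def by blast

lemma K_indepD:
  assumes "K_indep K B" "finite C" "C \<subseteq> B" "\<forall>x\<in>C. c x \<in> K" "(\<Sum>x\<in>C. c x * x) = 0" "x \<in> C"
  shows "c x = 0"
  using assms unfolding K_indep_def by blast

lemma K_span_eq_image_PiE:
  fixes K :: "'a::field set"
  assumes A: "finite A" and K0: "0 \<in> K"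
  shows "K_span K A = (\<lambda>d. \<Sum>x\<in>A. d x * x) ` (A \<rightarrow>\<^sub>E K)"
proof
  show "K_span K A \<subseteq> (\<lambda>d. \<Sum>x\<in>A. d x * x) ` (A \<rightarrow>\<^sub>E K)"
  proof
    fix v assume "v \<in> K_span K A"
    then obtain C c where C: "finite C" "C \<subseteq> A" "\<forall>x\<in>C. c x \<in> K" and v: "v = (\<Sum>x\<in>C. c x * x)"
      by (rule K_spanE)
    define d where "d = (\<lambda>x. if x \<in> A then (if x \<in> C then c x else 0) else undefined)"
    have "d \<in> A \<rightarrow>\<^sub>E K" using C K0 by (auto simp: d_def)
    moreover have "(\<Sum>x\<in>A. d x * x) = v"
      unfolding v by (rule sum.mono_neutral_cong_right) (use A C in \<open>auto simp: d_def\<close>)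
    ultimately show "v \<in> (\<lambda>d. \<Sum>x\<in>A. d x * x) ` (A \<rightarrow>\<^sub>E K)" by force
  qed
next
  show "(\<lambda>d. \<Sum>x\<in>A. d x * x) ` (A \<rightarrow>\<^sub>E K) \<subseteq> K_span K A"
    using A by (auto intro!: K_spanI simp: PiE_def Pi_def)
qed

lemma card_K_span_le:
  fixes K :: "'a::field set"
  assumes K0: "0 \<in> K" and A: "finite A" and K: "finite K"
  shows "card (K_span K A) \<le> card K ^ card A"
proof -
  have "card (K_span K A) \<le> card (A \<rightarrow>\<^sub>E K)" unfolding K_span_eq_image_PiE[OF A K0]
    by (rule card_image_le) (simp add: A K finite_PiE)
  also have "\<dots> = card K ^ card A" unfolding card_PiE[OF A] prod_constant ..
  finally show ?thesis .
qed

lemma K_subspace_sum: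
  fixes K :: "'a::field set"
  assumes V: "K_subspace K V" and C: "finite C" and "\<forall>x\<in>C. c x \<in> K \<and> x \<in> V"
  shows "(\<Sum>x\<in>C. c x * x) \<in> V"
  using C assms(3) V by (induction C rule: finite_induct) (simp_all add: K_subspace_def)

lemma K_span_subset_subspace:
  assumes "K_subspace K V" "B \<subseteq> V"
  shows "K_span K B \<subseteq> V"
proof
  fix v assume "v \<in> K_span K B"
  then obtain C c where "finite C" "C \<subseteq> B" "\<forall>x\<in>C. c x \<in> K" "v = (\<Sum>x\<in>C. c x * x)"
    by (rule K_spanE)
  then show "v \<in> V" using K_subspace_sum[OF assms(1)] assms(2) by blast
qed

lemma subset_K_span:
  assumes "subfield K"
  shows "B \<subseteq> K_span K B"
proof
  fix v assume "v \<in> B"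
  then show "v \<in> K_span K B"
    using subfield_facts(2)[OF assms] by (intro K_spanI[of "{v}" B "\<lambda>_. 1"]) auto
qed

lemma K_indep_insert:
  fixes K :: "'a::field set"
  assumes K: "subfield K" and B: "K_indep K B" and v: "v \<notin> K_span K B"
  shows "K_indep K (insert v B)"
  unfolding K_indep_def
proof (intro allI impI ballI)
  fix C c x
  assume "finite C \<and> C \<subseteq> insert v B \<and> (\<forall>x\<in>C. c x \<in> K) \<and> (\<Sum>x\<in>C. c x * x) = 0"
  then have C: "finite C" "C \<subseteq> insert v B" and c: "\<forall>x\<in>C. c x \<in> K"
    and zero: "(\<Sum>x\<in>C. c x * x) = 0" by blast+
  assume x: "x \<in> C"
  have CB: "C - {v} \<subseteq> B" using C by auto
  show "c x = 0"
  proof (cases "v \<in> C")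
    case False
    then show ?thesis using K_indepD[OF B C(1) _ c zero x] CB by auto
  next
    case True
    have split: "c v * v + (\<Sum>x\<in>C - {v}. c x * x) = 0"
      using zero True C by (simp add: sum.remove)
    have cv: "c v = 0"
    proof (rule ccontr)
      assume "c v \<noteq> 0"
      have "v = - inverse (c v) * (\<Sum>x\<in>C - {v}. c x * x)"
        using split \<open>c v \<noteq> 0\<close> by (simp add: eq_neg_iff_add_eq_0 field_simps)
      then have "v = (\<Sum>x\<in>C - {v}. (- inverse (c v) * c x) * x)"
        by (simp add: sum_distrib_left mult.assoc)
      moreover have "\<forall>x\<in>C - {v}. - inverse (c v) * c x \<in> K"
        using c True subfield_facts[OF K] by simp
      ultimately have "v \<in> K_span K B" using C CB by (intro K_spanI) auto
      with v show False ..
    qed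
    then have "(\<Sum>x\<in>C - {v}. c x * x) = 0" using split by simp
    then show ?thesis using K_indepD[OF B _ CB] C c x cv by (cases "x = v") auto
  qed
qed

lemma K_basis_exists:
  fixes K :: "'a::{field,finite} set"
  assumes K: "subfield K" and V: "K_subspace K V"
  shows "\<exists>B. K_basis K V B"
proof -
  let ?P = "\<lambda>n. \<exists>B. B \<subseteq> V \<and> K_indep K B \<and> card B = n"
  have "?P 0" by (rule exI[of _ "{}"]) (simp add: K_indep_def)
  moreover have "\<forall>n. ?P n \<longrightarrow> n \<le> card (UNIV :: 'a set)"
    by (auto intro: card_mono)
  ultimately have "\<exists>n. ?P n \<and> (\<forall>k. ?P k \<longrightarrow> k \<le> n)"
    by (rule Nat.ex_has_greatest_nat)
  then obtain n where "?P n" and max: "\<forall>k. ?P k \<longrightarrow> k \<le> n" by blast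
  then obtain B where BV: "B \<subseteq> V" and B: "K_indep K B" and card_B: "card B = n" by blast
  have "V \<subseteq> K_span K B"
  proof
    fix v assume "v \<in> V"
    show "v \<in> K_span K B"
    proof (rule ccontr)
      assume v: "v \<notin> K_span K B"
      then have "v \<notin> B" using subset_K_span[OF K] by blast
      then have "?P (Suc n)"
        using K_indep_insert[OF K B v] BV \<open>v \<in> V\<close> card_B by (intro exI[of _ "insert v B"]) auto
      then have "Suc n \<le> n" using max by blast
      then show False by simp
    qed
  qed
  then have "K_span K B = V" using K_span_subset_subspace[OF V BV] by blast
  then show ?thesis using BV B unfolding K_basis_def by blast
qed

lemma card_K_basis:
  fixes K :: "'a::{field,finite} set"
  assumes K: "subfield K" and B: "K_basis K V B"
  shows "card V = card K ^ card B"
proof -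
  let ?comb = "\<lambda>d. \<Sum>x\<in>B. d x * x"
  have V: "V = ?comb ` (B \<rightarrow>\<^sub>E K)"
    using B K_span_eq_image_PiE[OF finite subfield_facts(1)[OF K]] unfolding K_basis_def by blast
  have "inj_on ?comb (B \<rightarrow>\<^sub>E K)"
  proof (rule inj_onI)
    fix d1 d2 assume d1: "d1 \<in> B \<rightarrow>\<^sub>E K" and d2: "d2 \<in> B \<rightarrow>\<^sub>E K" and "?comb d1 = ?comb d2"
    then have "(\<Sum>x\<in>B. (d1 x - d2 x) * x) = 0"
      by (simp add: left_diff_distrib sum_subtractf)
    moreover have "\<forall>x\<in>B. d1 x - d2 x \<in> K"
      using d1 d2 subfield_diff[OF K] by (auto dest: PiE_mem)
    ultimately have "\<forall>x\<in>B. d1 x - d2 x = 0"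
      using K_indepD[of K B B "\<lambda>x. d1 x - d2 x", OF _ finite] B unfolding K_basis_def by blast
    then show "d1 = d2" using PiE_ext[OF d1 d2] by simp
  qed
  then have "card V = card (B \<rightarrow>\<^sub>E K)" unfolding V by (rule card_image)
  also have "\<dots> = card K ^ card B" unfolding card_PiE[OF finite] prod_constant ..
  finally show ?thesis .
qed

lemma card_K_subspace:
  fixes K :: "'a::{field,finite} set"
  assumes K: "subfield K" and V: "K_subspace K V"
  shows "card V = card K ^ K_dim K V"
proof -
  have "K_basis K V (SOME B. K_basis K V B)" using K_basis_exists[OF K V] by (rule someI_ex)
  then show ?thesis using card_K_basis[OF K] unfolding K_dim_def by blast
qed

lemma K_subspace_mono: "K_subspace L V \<Longrightarrow> K \<subseteq> L \<Longrightarrow> K_subspace K V"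
  unfolding K_subspace_def by blast

lemma K_subspace_Int: "K_subspace K V \<Longrightarrow> K_subspace K W \<Longrightarrow> K_subspace K (V \<inter> W)"
  unfolding K_subspace_def by blast

lemma K_subspace_diff:
  assumes K: "subfield K" and V: "K_subspace K V" and "x \<in> V" "y \<in> V"
  shows "x - y \<in> V"
proof -
  have "(- 1) * y \<in> V" using V subfield_facts(2,5)[OF K] \<open>y \<in> V\<close> unfolding K_subspace_def by blast
  then show ?thesis using V \<open>x \<in> V\<close> unfolding K_subspace_def by (metis diff_conv_add_uminus mult_minus1)
qed

lemma K_subspace_K_span:
  fixes K :: "'a::field set"
  assumes K: "subfield K"
  shows "K_subspace K (K_span K A)"
  unfolding K_subspace_def
proof (intro conjI ballI)
  show "0 \<in> K_span K A" by (rule K_spanI[of "{}"]) auto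
next
  fix x y assume "x \<in> K_span K A" "y \<in> K_span K A"
  obtain C c where C: "finite C" "C \<subseteq> A" "\<forall>z\<in>C. c z \<in> K" and x: "x = (\<Sum>z\<in>C. c z * z)"
    using \<open>x \<in> K_span K A\<close> by (rule K_spanE)
  obtain D d where D: "finite D" "D \<subseteq> A" "\<forall>z\<in>D. d z \<in> K" and y: "y = (\<Sum>z\<in>D. d z * z)"
    using \<open>y \<in> K_span K A\<close> by (rule K_spanE)
  define c' where "c' z = (if z \<in> C then c z else 0)" for z
  define d' where "d' z = (if z \<in> D then d z else 0)" for z
  have "x = (\<Sum>z\<in>C \<union> D. c' z * z)"
    unfolding x by (rule sum.mono_neutral_cong_left) (use C D in \<open>auto simp: c'_def\<close>)
  moreover have "y = (\<Sum>z\<in>C \<union> D. d' z * z)"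
    unfolding y by (rule sum.mono_neutral_cong_left) (use C D in \<open>auto simp: d'_def\<close>)
  ultimately have "x + y = (\<Sum>z\<in>C \<union> D. (c' z + d' z) * z)"
    by (simp add: distrib_right sum.distrib)
  moreover have "\<forall>z\<in>C \<union> D. c' z + d' z \<in> K"
    using C D subfield_facts(1,3)[OF K] by (simp add: c'_def d'_def)
  ultimately show "x + y \<in> K_span K A" using C D by (intro K_spanI) auto
next
  fix a x assume a: "a \<in> K" and "x \<in> K_span K A"
  then obtain C c where C: "finite C" "C \<subseteq> A" "\<forall>z\<in>C. c z \<in> K" and x: "x = (\<Sum>z\<in>C. c z * z)"
    by (elim K_spanE)
  have "a * x = (\<Sum>z\<in>C. (a * c z) * z)" unfolding x by (simp add: sum_distrib_left mult.assoc)
  moreover have "\<forall>z\<in>C. a * c z \<in> K" using C a subfield_facts(4)[OF K] by blast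
  ultimately show "a * x \<in> K_span K A" using C by (intro K_spanI) auto
qed

lemma K_subspace_sums:
  assumes U: "K_subspace K U" and Y: "K_subspace K Y"
  shows "K_subspace K {u + y | u y. u \<in> U \<and> y \<in> Y}"
  unfolding K_subspace_def
proof (intro conjI ballI)
  show "0 \<in> {u + y | u y. u \<in> U \<and> y \<in> Y}" using U Y unfolding K_subspace_def by force
next
  fix a b assume "a \<in> {u + y | u y. u \<in> U \<and> y \<in> Y}" "b \<in> {u + y | u y. u \<in> U \<and> y \<in> Y}"
  then obtain u1 y1 u2 y2 where "a = u1 + y1" "b = u2 + y2" "u1 \<in> U" "u2 \<in> U" "y1 \<in> Y" "y2 \<in> Y"
    by blast
  moreover have "u1 + y1 + (u2 + y2) = (u1 + u2) + (y1 + y2)" by (simp add: algebra_simps)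
  ultimately show "a + b \<in> {u + y | u y. u \<in> U \<and> y \<in> Y}" using U Y unfolding K_subspace_def by blast
next
  fix c a assume "c \<in> K" and "a \<in> {u + y | u y. u \<in> U \<and> y \<in> Y}"
  moreover have "c * (u + y) = c * u + c * y" for u y by (simp add: algebra_simps)
  ultimately show "c * a \<in> {u + y | u y. u \<in> U \<and> y \<in> Y}" using U Y unfolding K_subspace_def by blast
qed

lemma K_subspace_image_mult:
  fixes \<alpha> :: "'a::field"
  assumes V: "K_subspace K V"
  shows "K_subspace K ((\<lambda>x. \<alpha> * x) ` V)"
  using V unfolding K_subspace_def
  by (auto simp: image_iff distrib_left[symmetric] mult.left_commute[of _ \<alpha>])

lemma image_mult_sums:
  fixes \<alpha> :: "'a::field"
  shows "(\<lambda>x. \<alpha> * x) ` {u + y | u y. u \<in> U \<and> y \<in> Y}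
    = {u + y | u y. u \<in> (\<lambda>x. \<alpha> * x) ` U \<and> y \<in> (\<lambda>x. \<alpha> * x) ` Y}"
proof (intro equalityI subsetI)
  fix w assume "w \<in> (\<lambda>x. \<alpha> * x) ` {u + y | u y. u \<in> U \<and> y \<in> Y}"
  then obtain u y where "u \<in> U" "y \<in> Y" "w = \<alpha> * u + \<alpha> * y" by (auto simp: distrib_left)
  then show "w \<in> {u + y | u y. u \<in> (\<lambda>x. \<alpha> * x) ` U \<and> y \<in> (\<lambda>x. \<alpha> * x) ` Y}" by blast
next
  fix w assume "w \<in> {u + y | u y. u \<in> (\<lambda>x. \<alpha> * x) ` U \<and> y \<in> (\<lambda>x. \<alpha> * x) ` Y}"
  then obtain u y where "u \<in> U" "y \<in> Y" "w = \<alpha> * (u + y)" by (auto simp: distrib_left)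
  then show "w \<in> (\<lambda>x. \<alpha> * x) ` {u + y | u y. u \<in> U \<and> y \<in> Y}" by blast
qed

lemma card_sums_Int_le:
  fixes U V Y Z :: "'a::{ab_group_add,finite} set"
  assumes U: "\<And>x y. x \<in> U \<Longrightarrow> y \<in> U \<Longrightarrow> x - y \<in> U"
    and V: "\<And>x y. x \<in> V \<Longrightarrow> y \<in> V \<Longrightarrow> x - y \<in> V"
  shows "card ({u + y | u y. u \<in> U \<and> y \<in> Y} \<inter> {v + z | v z. v \<in> V \<and> z \<in> Z})
    \<le> card Y * card Z * card (U \<inter> V)"
proof -
  let ?W = "{u + y | u y. u \<in> U \<and> y \<in> Y} \<inter> {v + z | v z. v \<in> V \<and> z \<in> Z}"
  define T where "T p = {w. w - fst p \<in> U \<and> w - snd p \<in> V}" for p :: "'a \<times> 'a"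
  have cover: "?W \<subseteq> (\<Union>p\<in>Y \<times> Z. T p)"
  proof
    fix w assume "w \<in> ?W"
    then obtain u y v z where "u \<in> U" "y \<in> Y" "w = u + y" "v \<in> V" "z \<in> Z" "w = v + z"
      by blast
    moreover have "w - y = u" using \<open>w = u + y\<close> by simp
    moreover have "w - z = v" using \<open>w = v + z\<close> by simp
    ultimately have "(y, z) \<in> Y \<times> Z" "w \<in> T (y, z)" by (simp_all add: T_def)
    then show "w \<in> (\<Union>p\<in>Y \<times> Z. T p)" by blast
  qed
  have card_T: "card (T p) \<le> card (U \<inter> V)" for p
  proof (cases "T p = {}")
    case False
    then obtain w0 where w0: "w0 \<in> T p" by blast
    have "(\<lambda>w. w - w0) ` T p \<subseteq> U \<inter> V"
    proof
      fix x assume "x \<in> (\<lambda>w. w - w0) ` T p"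
      then obtain w where w: "w \<in> T p" and x: "x = w - w0" by blast
      have "(w - fst p) - (w0 - fst p) \<in> U" using w w0 U unfolding T_def by blast
      moreover have "(w - snd p) - (w0 - snd p) \<in> V" using w w0 V unfolding T_def by blast
      ultimately show "x \<in> U \<inter> V" unfolding x by simp
    qed
    moreover have "inj_on (\<lambda>w. w - w0) (T p)" by (rule inj_onI) simp
    ultimately show ?thesis by (intro card_inj_on_le) auto
  qed simp
  have "card ?W \<le> card (\<Union>p\<in>Y \<times> Z. T p)" using cover by (rule card_mono[OF finite])
  also have "\<dots> \<le> (\<Sum>p\<in>Y \<times> Z. card (T p))" by (rule card_UN_le) simp
  also have "\<dots> \<le> card (Y \<times> Z) * card (U \<inter> V)" by (rule sum_bounded_above[OF card_T, simplified])
  finally show ?thesis by (simp add: card_cartesian_product)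
qed

theorem lemma4p5:
  fixes q n t l m i :: nat
    and Fq Fqt Sbar S :: "'a::{field,finite} set"
    and lam b \<alpha> :: 'a
  assumes "prime_power q"
    and "card (UNIV :: 'a set) = q ^ n"
    and "subfield Fq" and "card Fq = q"
    and "lam \<notin> Fq"
    and "t = K_dim Fq (gen_subfield (Fq \<union> {lam}))"
    and "subfield Fqt" and "card Fqt = q ^ t"
    and "K_subspace Fqt Sbar" and "K_dim Fqt Sbar = l" and "l > 0"
    and "b \<noteq> 0" and "((\<lambda>x. b * x) ` Fqt) \<inter> Sbar = {0}"
    and "0 < m" and "m < t"
    and "S = {s + y | s y. s \<in> Sbar \<and> y \<in> K_span Fq ((\<lambda>j. b * lam ^ j) ` {..<m})}"
    and "\<alpha> \<noteq> 0"
    and "K_dim Fqt (Sbar \<inter> ((\<lambda>x. \<alpha> * x) ` Sbar)) = i"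
  shows "K_dim Fq (S \<inter> ((\<lambda>x. \<alpha> * x) ` S)) \<le> 2 * m + t * i"
proof -
  note Fq = \<open>subfield Fq\<close> and Fqt = \<open>subfield Fqt\<close> and Sbar = \<open>K_subspace Fqt Sbar\<close>
  let ?mult = "\<lambda>x. \<alpha> * x"
  define Y where "Y = K_span Fq ((\<lambda>j. b * lam ^ j) ` {..<m})"
  define I where "I = Sbar \<inter> ?mult ` Sbar"
  define W where "W = S \<inter> ?mult ` S"
  have S: "S = {s + y | s y. s \<in> Sbar \<and> y \<in> Y}" using assms(16) unfolding Y_def .
  have q: "card Fq = q" "q > 1" using assms(4) subfield_card_ge_2[OF Fq] by simp_all
  have "Fq \<subseteq> Fqt" using subfield_subset_if_card_power[OF Fq Fqt] assms(4,8) by simp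
  then have S_subspace: "K_subspace Fq S"
    unfolding S Y_def by (intro K_subspace_sums K_subspace_mono[OF Sbar] K_subspace_K_span[OF Fq])
  have \<alpha>Sbar: "K_subspace Fqt (?mult ` Sbar)" by (rule K_subspace_image_mult[OF Sbar])
  have card_W: "card W = q ^ K_dim Fq W"
    unfolding W_def using q S_subspace
    by (simp add: card_K_subspace[OF Fq] K_subspace_Int K_subspace_image_mult)
  have card_I: "card I = q ^ (t * i)"
    unfolding I_def using assms(8,18) Sbar \<alpha>Sbar
    by (simp add: card_K_subspace[OF Fqt] K_subspace_Int power_mult)
  have card_Y: "card Y \<le> q ^ m"
  proof -
    have "card Y \<le> q ^ card ((\<lambda>j. b * lam ^ j) ` {..<m})"
      unfolding Y_def q(1)[symmetric] by (rule card_K_span_le[OF subfield_facts(1)[OF Fq] finite finite])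
    also have "\<dots> \<le> q ^ m"
      using card_image_le[of "{..<m}"] q(2) by (simp add: power_increasing)
    finally show ?thesis .
  qed
  have "card W \<le> card Y * card (?mult ` Y) * card I"
    unfolding W_def I_def S image_mult_sums
    by (rule card_sums_Int_le[OF K_subspace_diff[OF Fqt Sbar] K_subspace_diff[OF Fqt \<alpha>Sbar]])
  also have "\<dots> \<le> q ^ m * q ^ m * q ^ (t * i)"
    using card_Y card_image_le[of Y ?mult] card_I by (simp add: mult_le_mono)
  finally have "q ^ K_dim Fq W \<le> q ^ (2 * m + t * i)"
    unfolding card_W by (simp add: power_add mult_2)
  then show ?thesis
    unfolding W_def using q(2) by (rule power_le_imp_le_exp[rotated])
qed

end
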